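(* For $n\ge1$, let $g(n)$ be the number of permutations of $[n]$ with all valleys even and all peaks odd that end with an ascent, and let $c(n)$, $d(n)$ be the numbers of permutations of $[n]$ in which every alternating run has length less than $3$ and the last alternating run has length $1$, respectively $2$. Then $g(n)=c(n)$ if $n$ is odd and $g(n)=d(n)$ if $n$ is even.
   Context: For $\pi=\pi_1\cdots\pi_n$: index $i\in\{2,\dots,n-1\}$ is a peak if $\pi_{i-1}<\pi_i>\pi_{i+1}$, a valley if $\pi_{i-1}>\pi_i<\pi_{i+1}$; $\pi$ ends with an ascent if $n\ge2$ and $\pi_{n-1}<\pi_n$. $i\in[n-1]$ is an alternating descent if $i$ odd and $\pi_i>\pi_{i+1}$, or $i$ even and $\pi_i<\pi_{i+1}$; an alternating run is a maximal block of consecutive entries containing no alternating descent; the last alternating run is the one containing $\pi_n$. *)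

theory Defs
  imports "HOL-Combinatorics.Multiset_Permutations"
begin

text \<open>A permutation of [n] is a list p with p \<in> permutations_of_set {1..n};
  the entry pi_i (1-indexed) is p ! (i - 1).\<close>

definition ent :: "nat list \<Rightarrow> nat \<Rightarrow> nat" where
  "ent p i = p ! (i - 1)"

definition is_peak :: "nat list \<Rightarrow> nat \<Rightarrow> bool" where
  "is_peak p i \<longleftrightarrow> 2 \<le> i \<and> i \<le> length p - 1 \<and>
     ent p (i - 1) < ent p i \<and> ent p i > ent p (i + 1)"

definition is_valley :: "nat list \<Rightarrow> nat \<Rightarrow> bool" where
  "is_valley p i \<longleftrightarrow> 2 \<le> i \<and> i \<le> length p - 1 \<and>
     ent p (i - 1) > ent p i \<and> ent p i < ent p (i + 1)"

definition ends_with_ascent :: "nat list \<Rightarrow> bool" where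
  "ends_with_ascent p \<longleftrightarrow> length p \<ge> 2 \<and> ent p (length p - 1) < ent p (length p)"

definition alt_descent :: "nat list \<Rightarrow> nat \<Rightarrow> bool" where
  "alt_descent p i \<longleftrightarrow> 1 \<le> i \<and> i \<le> length p - 1 \<and>
     ((odd i \<and> ent p i > ent p (i + 1)) \<or> (even i \<and> ent p i < ent p (i + 1)))"

definition alt_run :: "nat list \<Rightarrow> nat \<Rightarrow> nat \<Rightarrow> bool" where
  "alt_run p a b \<longleftrightarrow> 1 \<le> a \<and> a \<le> b \<and> b \<le> length p \<and>
     (\<forall>i. a \<le> i \<and> i < b \<longrightarrow> \<not> alt_descent p i) \<and>
     (a = 1 \<or> alt_descent p (a - 1)) \<and>
     (b = length p \<or> alt_descent p b)"

definition g_count :: "nat \<Rightarrow> nat" where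
  "g_count n = card {p \<in> permutations_of_set {1..n}.
     (\<forall>i. is_valley p i \<longrightarrow> even i) \<and> (\<forall>i. is_peak p i \<longrightarrow> odd i) \<and> ends_with_ascent p}"

definition runs_last :: "nat \<Rightarrow> nat \<Rightarrow> nat" where
  "runs_last k n = card {p \<in> permutations_of_set {1..n}.
     (\<forall>a b. alt_run p a b \<longrightarrow> b - a + 1 < 3) \<and>
     (\<exists>a. alt_run p a n \<and> n - a + 1 = k)}"

definition c_count :: "nat \<Rightarrow> nat" where "c_count n = runs_last 1 n"
definition d_count :: "nat \<Rightarrow> nat" where "d_count n = runs_last 2 n"

end

theory Submission
  imports Defs
begin

text \<open>An index \<open>i + 1\<close> carries no alternating descent on either side exactly when it is
  a peak at an even index or a valley at an odd index. Hence "all valleys even and all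
  peaks odd" says that every two consecutive indices contain an alternating descent, i.e.
  that every alternating run has length at most 2. Since \<open>n - 1\<close> and \<open>n\<close> have
  opposite parity, ending with an ascent says that \<open>n - 1\<close> is an alternating descent iff
  \<open>n\<close> is odd, i.e. that the last run has length 1 for odd \<open>n\<close> and 2 for even \<open>n\<close>.\<close>

definition alt_descents_dense :: "nat list \<Rightarrow> bool" where
  "alt_descents_dense p \<longleftrightarrow>
     (\<forall>i. 1 \<le> i \<and> i + 2 \<le> length p \<longrightarrow> alt_descent p i \<or> alt_descent p (i + 1))"

lemma ent_Suc_neq:
  assumes "distinct p" "1 \<le> i" "i < length p"
  shows "ent p (Suc i) \<noteq> ent p i"
  using assms unfolding ent_def by (simp add: nth_eq_iff_index_eq)

lemma alt_descent_pair_iff_turn_parity: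
  assumes "distinct p" "1 \<le> i" "i + 2 \<le> length p"
  shows "alt_descent p i \<or> alt_descent p (i + 1) \<longleftrightarrow>
    (is_valley p (i + 1) \<longrightarrow> even (i + 1)) \<and> (is_peak p (i + 1) \<longrightarrow> odd (i + 1))"
proof -
  let ?x = "ent p i" and ?y = "ent p (i + 1)" and ?z = "ent p (i + 2)"
  have "?y \<noteq> ?x" "?z \<noteq> ?y"
    using ent_Suc_neq[OF assms(1), of i] ent_Suc_neq[OF assms(1), of "i + 1"] assms(2,3)
    by simp_all
  moreover have "alt_descent p i \<longleftrightarrow> (if odd i then ?x > ?y else ?x < ?y)"
    "alt_descent p (i + 1) \<longleftrightarrow> (if odd i then ?y < ?z else ?y > ?z)"
    "is_valley p (i + 1) \<longleftrightarrow> ?x > ?y \<and> ?y < ?z"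
    "is_peak p (i + 1) \<longleftrightarrow> ?x < ?y \<and> ?y > ?z"
    using assms(2,3) unfolding alt_descent_def is_valley_def is_peak_def
    by (auto simp: add.commute)
  ultimately show ?thesis by (cases "odd i") auto
qed

lemma peak_valley_parity_iff_alt_descents_dense:
  assumes "distinct p"
  shows "(\<forall>i. is_valley p i \<longrightarrow> even i) \<and> (\<forall>i. is_peak p i \<longrightarrow> odd i) \<longleftrightarrow>
    alt_descents_dense p"
proof -
  have turn: "\<exists>i. k = i + 1 \<and> 1 \<le> i \<and> i + 2 \<le> length p" if "is_valley p k \<or> is_peak p k"
    for k using that unfolding is_valley_def is_peak_def by (intro exI[of _ "k - 1"]) auto
  show ?thesis
    unfolding alt_descents_dense_def
    using alt_descent_pair_iff_turn_parity[OF assms] turn by metis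
qed

lemma ends_with_ascent_iff_alt_descent_last:
  assumes "distinct p" "length p \<ge> 2"
  shows "ends_with_ascent p \<longleftrightarrow> (alt_descent p (length p - 1) \<longleftrightarrow> odd (length p))"
proof -
  have "ent p (length p) \<noteq> ent p (length p - 1)"
    using ent_Suc_neq[OF assms(1), of "length p - 1"] assms(2) by (cases "length p") auto
  with assms(2) show ?thesis
    unfolding ends_with_ascent_def alt_descent_def
    by (cases "odd (length p)") (auto simp: less_le)
qed

lemma alt_run_containing:
  assumes "1 \<le> i" "i \<le> j" "j \<le> length p"
    and free: "\<And>k. i \<le> k \<Longrightarrow> k < j \<Longrightarrow> \<not> alt_descent p k"
  obtains a b where "alt_run p a b" "a \<le> i" "j \<le> b"
proof -
  define A where "A = {a. 1 \<le> a \<and> a \<le> i \<and> (a = 1 \<or> alt_descent p (a - 1))}"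
  define B where "B = {b. j \<le> b \<and> b \<le> length p \<and> (b = length p \<or> alt_descent p b)}"
  define a where "a = Max A"
  define b where "b = Min B"
  have "1 \<in> A" "length p \<in> B" "finite A" "finite B"
    using assms unfolding A_def B_def by auto
  then have "a \<in> A" "b \<in> B" "\<And>x. x \<in> A \<Longrightarrow> x \<le> a" "\<And>x. x \<in> B \<Longrightarrow> b \<le> x"
    unfolding a_def b_def by (auto intro: Max_in Min_in)
  then have bounds: "1 \<le> a" "a \<le> i" "a = 1 \<or> alt_descent p (a - 1)"
    "j \<le> b" "b \<le> length p" "b = length p \<or> alt_descent p b"
    and maxA: "\<And>x. x \<in> A \<Longrightarrow> x \<le> a" and minB: "\<And>x. x \<in> B \<Longrightarrow> b \<le> x"
    unfolding A_def B_def by auto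
  have "\<not> alt_descent p k" if "a \<le> k" "k < b" for k
  proof
    assume k: "alt_descent p k"
    consider "k < i" | "i \<le> k" "k < j" | "j \<le> k" by linarith
    then show False
    proof cases
      case 1
      with k have "k + 1 \<in> A" unfolding A_def by simp
      with maxA \<open>a \<le> k\<close> show False by fastforce
    next
      case 2
      with free k show False by blast
    next
      case 3
      with k \<open>k < b\<close> \<open>b \<le> length p\<close> have "k \<in> B" unfolding B_def by simp
      with minB \<open>k < b\<close> show False by fastforce
    qed
  qed
  with bounds assms(2) have "alt_run p a b"
    unfolding alt_run_def by simp
  with bounds show thesis using that by blast
qed

lemma alt_runs_short_iff_alt_descents_dense:
  "(\<forall>a b. alt_run p a b \<longrightarrow> b - a + 1 < 3) \<longleftrightarrow> alt_descents_dense p"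
proof
  assume short: "\<forall>a b. alt_run p a b \<longrightarrow> b - a + 1 < 3"
  show "alt_descents_dense p"
    unfolding alt_descents_dense_def
  proof (intro allI impI)
    fix i assume i: "1 \<le> i \<and> i + 2 \<le> length p"
    show "alt_descent p i \<or> alt_descent p (i + 1)"
    proof (rule ccontr)
      assume "\<not> ?thesis"
      then have "\<And>k. i \<le> k \<Longrightarrow> k < i + 2 \<Longrightarrow> \<not> alt_descent p k"
        using less_Suc_eq by fastforce
      with i obtain a b where "alt_run p a b" "a \<le> i" "i + 2 \<le> b"
        using alt_run_containing[of i "i + 2" p] by auto
      with short show False by fastforce
    qed
  qed
next
  assume dense: "alt_descents_dense p"
  show "\<forall>a b. alt_run p a b \<longrightarrow> b - a + 1 < 3"
  proof (intro allI impI)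
    fix a b assume run: "alt_run p a b"
    show "b - a + 1 < 3"
    proof (rule ccontr)
      assume "\<not> b - a + 1 < 3"
      with run have "a + 2 \<le> b" "1 \<le> a" "b \<le> length p"
        "\<not> alt_descent p a" "\<not> alt_descent p (a + 1)"
        unfolding alt_run_def by auto
      with dense show False unfolding alt_descents_dense_def by auto
    qed
  qed
qed

lemma last_alt_run_length_1_iff:
  assumes "length p \<ge> 2"
  shows "(\<exists>a. alt_run p a (length p) \<and> length p - a + 1 = 1) \<longleftrightarrow>
    alt_descent p (length p - 1)"
proof
  assume "\<exists>a. alt_run p a (length p) \<and> length p - a + 1 = 1"
  with assms show "alt_descent p (length p - 1)" unfolding alt_run_def by auto
next
  assume "alt_descent p (length p - 1)"
  with assms have "alt_run p (length p) (length p)" unfolding alt_run_def by auto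
  then show "\<exists>a. alt_run p a (length p) \<and> length p - a + 1 = 1" by auto
qed

lemma last_alt_run_length_2_iff:
  assumes "length p \<ge> 2" "alt_descents_dense p"
  shows "(\<exists>a. alt_run p a (length p) \<and> length p - a + 1 = 2) \<longleftrightarrow>
    \<not> alt_descent p (length p - 1)"
proof
  assume "\<exists>a. alt_run p a (length p) \<and> length p - a + 1 = 2"
  then obtain a where "alt_run p a (length p)" "a = length p - 1" by fastforce
  then show "\<not> alt_descent p (length p - 1)" unfolding alt_run_def by auto
next
  assume last: "\<not> alt_descent p (length p - 1)"
  have "length p - 1 = 1 \<or> alt_descent p (length p - 1 - 1)"
  proof (cases "length p = 2")
    case False
    with assms(1) have "3 \<le> length p" by simp
    then obtain m where m: "length p = 3 + m" by (auto simp: le_iff_add)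
    with assms(2) have "alt_descent p (m + 1) \<or> alt_descent p (m + 2)"
      unfolding alt_descents_dense_def by simp
    with m last show ?thesis by simp
  qed simp
  moreover have "\<not> alt_descent p i" if "length p - 1 \<le> i" "i < length p" for i
    using that last by (cases "i = length p - 1") auto
  ultimately have "alt_run p (length p - 1) (length p)"
    using assms(1) unfolding alt_run_def by auto
  with assms(1) show "\<exists>a. alt_run p a (length p) \<and> length p - a + 1 = 2"
    by (intro exI[of _ "length p - 1"]) simp
qed

lemma peak_valley_parity_iff_short_alt_runs:
  assumes "distinct p" "length p \<ge> 2"
  shows "(\<forall>i. is_valley p i \<longrightarrow> even i) \<and> (\<forall>i. is_peak p i \<longrightarrow> odd i) \<and> ends_with_ascent p
    \<longleftrightarrow> (\<forall>a b. alt_run p a b \<longrightarrow> b - a + 1 < 3) \<and>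
      (\<exists>a. alt_run p a (length p) \<and>
        length p - a + 1 = (if odd (length p) then 1 else 2))"
proof -
  have "(\<forall>i. is_valley p i \<longrightarrow> even i) \<and> (\<forall>i. is_peak p i \<longrightarrow> odd i) \<and> ends_with_ascent p
    \<longleftrightarrow> alt_descents_dense p \<and> (alt_descent p (length p - 1) \<longleftrightarrow> odd (length p))"
    using peak_valley_parity_iff_alt_descents_dense[OF assms(1)]
      ends_with_ascent_iff_alt_descent_last[OF assms] by blast
  then show ?thesis
    unfolding alt_runs_short_iff_alt_descents_dense
    using last_alt_run_length_1_iff[OF assms(2)] last_alt_run_length_2_iff[OF assms(2)]
    by (cases "odd (length p)") (simp_all, blast)
qed

theorem mainTheorem16:
  fixes n :: nat
  assumes "n \<ge> 2"
  shows "g_count n = (if odd n then c_count n else d_count n)"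
proof -
  have same_condition:
    "(\<forall>i. is_valley p i \<longrightarrow> even i) \<and> (\<forall>i. is_peak p i \<longrightarrow> odd i) \<and> ends_with_ascent p
      \<longleftrightarrow> (\<forall>a b. alt_run p a b \<longrightarrow> b - a + 1 < 3) \<and>
        (\<exists>a. alt_run p a n \<and> n - a + 1 = (if odd n then 1 else 2))"
    if "p \<in> permutations_of_set {1..n}" for p
  proof -
    from that have "distinct p" "length p = n"
      by (auto simp: permutations_of_set_def dest: distinct_card)
    with assms show ?thesis using peak_valley_parity_iff_short_alt_runs[of p] by simp
  qed
  have "g_count n = runs_last (if odd n then 1 else 2) n"
    unfolding g_count_def runs_last_def
    using same_condition by (intro arg_cong[where f = card] Collect_cong) blast
  then show ?thesis unfolding c_count_def d_count_def by simp
qed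

end
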